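(* If $\sum_{i=1}^M b_i\ge1$, then for every $\epsilon>0$ the energy-adequate solution $\mathbf r^\star$ is feasible for Problem 1, i.e. $r^\star_l>0$ and $\sigma_l(\mathbf r^\star)\le b_l$ for all $l$.
   Context: Fix an integer $M\ge1$, weights $w_1,\dots,w_M>0$, constants $b_1,\dots,b_M>0$, and $\epsilon>0$. For $\mathbf r\in(0,\infty)^M$ write $S(\mathbf r)=\sum_{i=1}^M r_i$ and define $$\sigma_l(\mathbf r)=\frac{(1-e^{-r_l\epsilon})S(\mathbf r)+r_le^{-r_l\epsilon}}{S(\mathbf r)+1}.$$ Problem 1's constraint set is $\{\mathbf r\in(0,\infty)^M:\sigma_l(\mathbf r)\le b_l\ \forall l\}$. Energy-adequate solution (when $\sum_i b_i\ge1$): let $\beta^\star\in[0,\max_l b_l/\sqrt{w_l}]$ be the root of $\sum_{i=1}^M\min\{b_i,\beta^\star\sqrt{w_i}\}=1$, let $x^\star=-\tfrac12+\sqrt{\tfrac14+\tfrac1\epsilon}$, and set $r^\star_l=\min\{b_l,\beta^\star\sqrt{w_l}\}\,x^\star$. *)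

theory Defs
  imports Complex_Main
begin

(* Vectors r in (0,inf)^M are represented as functions nat => real indexed by {1..M}. *)

definition S_tot :: "nat \<Rightarrow> (nat \<Rightarrow> real) \<Rightarrow> real" where
  "S_tot M r = (\<Sum>i=1..M. r i)"

definition sigma :: "nat \<Rightarrow> real \<Rightarrow> (nat \<Rightarrow> real) \<Rightarrow> nat \<Rightarrow> real" where
  "sigma M \<epsilon> r l =
     ((1 - exp (- r l * \<epsilon>)) * S_tot M r + r l * exp (- r l * \<epsilon>)) / (S_tot M r + 1)"

definition x_star :: "real \<Rightarrow> real" where
  "x_star \<epsilon> = - 1/2 + sqrt (1/4 + 1/\<epsilon>)"

definition r_star :: "(nat \<Rightarrow> real) \<Rightarrow> (nat \<Rightarrow> real) \<Rightarrow> real \<Rightarrow> real \<Rightarrow> nat \<Rightarrow> real" where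
  "r_star w b \<beta> \<epsilon> l = min (b l) (\<beta> * sqrt (w l)) * x_star \<epsilon>"

end

theory Submission
  imports Defs
begin

text \<open>Write \<open>a\<^sub>l = min b\<^sub>l (\<beta> \<surd>w\<^sub>l)\<close>, so that \<open>\<Sum> a\<^sub>l = 1\<close> and \<open>r\<^sup>\<star>\<^sub>l = a\<^sub>l x\<^sup>\<star>\<close>; hence the
  total rate is \<open>S = x\<^sup>\<star>\<close>, the positive root of \<open>\<epsilon> x (x + 1) = 1\<close>. Using \<open>1 - e\<^sup>-\<^sup>u \<le> u\<close> and
  \<open>e\<^sup>-\<^sup>u \<le> 1\<close> one gets \<open>\<sigma>\<^sub>l \<le> r\<^sub>l (\<epsilon> S + 1) / (S + 1)\<close>, and at \<open>S = x\<^sup>\<star>\<close> the factor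
  \<open>x\<^sup>\<star> (\<epsilon> x\<^sup>\<star> + 1) / (x\<^sup>\<star> + 1)\<close> is at most \<open>1\<close> because \<open>\<epsilon> x\<^sup>\<star>\<^sup>2 \<le> 1\<close>. Thus
  \<open>\<sigma>\<^sub>l \<le> a\<^sub>l \<le> b\<^sub>l\<close>. The hypotheses \<open>M \<ge> 1\<close>, \<open>\<Sum> b\<^sub>i \<ge> 1\<close> and the upper bound on \<open>\<beta>\<close> only
  ensure that such a \<open>\<beta>\<close> exists; the argument does not use them.\<close>

lemma x_star_pos:
  assumes "\<epsilon> > 0"
  shows "x_star \<epsilon> > 0"
proof -
  have "sqrt (1/4 + 1/\<epsilon>) > sqrt (1/4)"
    using assms by (simp add: real_sqrt_less_iff)
  moreover have "sqrt (1/4 :: real) = 1/2"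
    by (simp add: real_sqrt_divide)
  ultimately show ?thesis
    unfolding x_star_def by simp
qed

lemma x_star_quadratic:
  assumes "\<epsilon> > 0"
  shows "\<epsilon> * x_star \<epsilon> * (x_star \<epsilon> + 1) = 1"
proof -
  have "(sqrt (1/4 + 1/\<epsilon>))\<^sup>2 = 1/4 + 1/\<epsilon>"
    using assms by simp
  then show ?thesis
    unfolding x_star_def using assms by (simp add: field_simps power2_eq_square)
qed

lemma x_star_mult_le:
  assumes "\<epsilon> > 0"
  shows "x_star \<epsilon> * (\<epsilon> * x_star \<epsilon> + 1) \<le> x_star \<epsilon> + 1"
proof -
  have "\<epsilon> * x_star \<epsilon> \<ge> 0"
    using x_star_pos[OF assms] assms by simp
  then show ?thesis
    using x_star_quadratic[OF assms] by (simp add: algebra_simps)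
qed

lemma sigma_le:
  assumes "\<epsilon> \<ge> 0" and "r l \<ge> 0" and "S_tot M r \<ge> 0"
  shows "sigma M \<epsilon> r l \<le> r l * (\<epsilon> * S_tot M r + 1) / (S_tot M r + 1)"
proof -
  define S e where "S = S_tot M r" and "e = exp (- r l * \<epsilon>)"
  have "1 - e \<le> r l * \<epsilon>"
    using exp_ge_add_one_self[of "- r l * \<epsilon>"] by (simp add: e_def)
  then have "(1 - e) * S \<le> r l * \<epsilon> * S"
    using assms(3) by (simp add: S_def mult_right_mono)
  moreover have "r l * e \<le> r l"
    using assms(1,2) by (simp add: e_def mult_left_le)
  ultimately have "(1 - e) * S + r l * e \<le> r l * (\<epsilon> * S + 1)"
    by (simp add: algebra_simps)
  then show ?thesis
    using assms(3) unfolding sigma_def S_def e_def by (simp add: divide_right_mono)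
qed

lemma S_tot_r_star:
  assumes "(\<Sum>i=1..M. min (b i) (\<beta> * sqrt (w i))) = 1"
  shows "S_tot M (r_star w b \<beta> \<epsilon>) = x_star \<epsilon>"
  using assms by (simp add: S_tot_def r_star_def flip: sum_distrib_right)

lemma beta_pos_of_sum_min_eq_one:
  assumes "\<forall>i\<in>{1..M}. b i > 0" and "0 \<le> \<beta>"
    and "(\<Sum>i=1..M. min (b i) (\<beta> * sqrt (w i))) = 1"
  shows "\<beta> > 0"
proof (rule ccontr)
  assume "\<not> \<beta> > 0"
  with assms(2) have "\<beta> = 0" by simp
  with assms(1) have "(\<Sum>i=1..M. min (b i) (\<beta> * sqrt (w i))) = 0"
    by (intro sum.neutral) (auto simp: min_def)
  with assms(3) show False by simp
qed

theorem lemma1: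
  fixes M :: nat and w b :: "nat \<Rightarrow> real" and \<epsilon> \<beta> :: real
  assumes "M \<ge> 1"
    and "\<forall>i\<in>{1..M}. w i > 0"
    and "\<forall>i\<in>{1..M}. b i > 0"
    and "\<epsilon> > 0"
    and "(\<Sum>i=1..M. b i) \<ge> 1"
    and "0 \<le> \<beta>"
    and "\<beta> \<le> Max ((\<lambda>l. b l / sqrt (w l)) ` {1..M})"
    and "(\<Sum>i=1..M. min (b i) (\<beta> * sqrt (w i))) = 1"
  shows "\<forall>l\<in>{1..M}. r_star w b \<beta> \<epsilon> l > 0 \<and> sigma M \<epsilon> (r_star w b \<beta> \<epsilon>) l \<le> b l"
proof
  fix l assume l: "l \<in> {1..M}"
  define x a where "x = x_star \<epsilon>" and "a = min (b l) (\<beta> * sqrt (w l))"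
  have x: "x > 0" "x * (\<epsilon> * x + 1) \<le> x + 1"
    using x_star_pos x_star_mult_le assms(4) by (auto simp: x_def)
  have "\<beta> > 0"
    using beta_pos_of_sum_min_eq_one assms(3,6,8) by blast
  then have a: "a > 0"
    using l assms(2,3) by (auto simp: a_def)
  have r: "r_star w b \<beta> \<epsilon> l = a * x"
    by (simp add: r_star_def a_def x_def)
  have S: "S_tot M (r_star w b \<beta> \<epsilon>) = x"
    using S_tot_r_star[OF assms(8)] by (simp add: x_def)
  have "sigma M \<epsilon> (r_star w b \<beta> \<epsilon>) l \<le> a * (x * (\<epsilon> * x + 1)) / (x + 1)"
    using sigma_le[of \<epsilon> "r_star w b \<beta> \<epsilon>" l M] assms(4) a x by (simp add: r S mult.assoc)
  also have "\<dots> \<le> a"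
    using a x by (simp add: divide_le_eq mult_left_mono)
  also have "a \<le> b l"
    by (simp add: a_def)
  finally show "r_star w b \<beta> \<epsilon> l > 0 \<and> sigma M \<epsilon> (r_star w b \<beta> \<epsilon>) l \<le> b l"
    using a x by (simp add: r)
qed

end
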